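(* Fix $m\ge1$, $\omega\in\mathbb Z\setminus\{0\}$, and set $\kappa=2\pi\omega$. For every $\delta\in(0,1)$ there exist $\varepsilon_R=\varepsilon_R(m,\omega,\delta)>0$ and $C_{\delta,m,\omega}<\infty$ such that every smooth closed immersed planar curve $\gamma$ of length $1$, turning number $\omega$ and $E_m[\gamma]\le\varepsilon_R$ satisfies $$\int_\gamma R^2\,ds\le\delta\,\mathcal P+C_{\delta,m,\omega}E_m[\gamma]^2,$$ where $\mathcal P=\int_\gamma k_{s^{2m+2}}^2ds$ and $$R:=\mathcal K_m-(-1)^{m+1}\big(k_{s^{2m+2}}+\kappa^2k_{s^{2m}}\big)=(-1)^{m+1}(k^2-\kappa^2)k_{s^{2m}}-\sum_{j=1}^{m-1}(-1)^jk\,k_{s^{m-j}}k_{s^{m+j}}-\tfrac12k\,k_{s^m}^2.$$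
   Context: $s$ arclength, $k$ signed curvature, $k_{s^j}$ its $j$-th arclength derivative, $E_m[\gamma]=\frac12\int_\gamma k_{s^m}^2ds$, $\mathcal K_m=(-1)^{m+1}k_{s^{2m+2}}-\tfrac12 k\,k_{s^m}^2+k\sum_{r=1}^m(-1)^{r+1}k_{s^{m-r}}k_{s^{m+r}}$; turning number $\frac1{2\pi}\int k\,ds$. *)

theory Defs
  imports "HOL-Analysis.Analysis"
begin

text \<open>A smooth closed planar curve, parametrised by arclength with period 1
  (hence of length 1). D n is the n-th derivative of the curve D 0.\<close>
definition smooth_closed_unit_curve :: "(nat \<Rightarrow> real \<Rightarrow> complex) \<Rightarrow> bool" where
  "smooth_closed_unit_curve D \<longleftrightarrow>
     (\<forall>n t. (D n has_vector_derivative D (Suc n) t) (at t)) \<and>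
     (\<forall>t. D 0 (t + 1) = D 0 t) \<and>
     (\<forall>t. norm (D 1 t) = 1)"

text \<open>Signed curvature of an arclength-parametrised curve: det(gamma', gamma'').\<close>
definition curv :: "(nat \<Rightarrow> real \<Rightarrow> complex) \<Rightarrow> real \<Rightarrow> real" where
  "curv D s = Im (cnj (D 1 s) * D 2 s)"

definition ds :: "nat \<Rightarrow> (real \<Rightarrow> real) \<Rightarrow> real \<Rightarrow> real" where
  "ds j k = (deriv ^^ j) k"

definition turning_number :: "(real \<Rightarrow> real) \<Rightarrow> real" where
  "turning_number k = (1 / (2 * pi)) * integral {0..1} k"

definition Em :: "nat \<Rightarrow> (real \<Rightarrow> real) \<Rightarrow> real" where
  "Em m k = (1/2) * integral {0..1} (\<lambda>s. (ds m k s)\<^sup>2)"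

definition Km :: "nat \<Rightarrow> (real \<Rightarrow> real) \<Rightarrow> real \<Rightarrow> real" where
  "Km m k s = (-1) ^ (m + 1) * ds (2*m+2) k s - (1/2) * k s * (ds m k s)\<^sup>2
     + k s * (\<Sum>r=1..m. (-1) ^ (r + 1) * ds (m - r) k s * ds (m + r) k s)"

definition Rm :: "nat \<Rightarrow> real \<Rightarrow> (real \<Rightarrow> real) \<Rightarrow> real \<Rightarrow> real" where
  "Rm m \<kappa> k s = Km m k s - (-1) ^ (m + 1) * (ds (2*m+2) k s + \<kappa>\<^sup>2 * ds (2*m) k s)"

end

theory Submission
  imports Defs
begin

(*
  The curvature k of a closed unit-speed curve of length 1 is smooth and 1-periodic, so each
  derivative k_(s^j), j >= 1, has mean zero over a period, and so has k - kappa by the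
  turning-number condition. A mean-zero f satisfies sup f^2 <= 4 |f'|^2 and |f|^2 <= 4 |f'|^2,
  where |.| is the L^2 norm on [0,1]. Integrating by parts, |k_(s^(j+1))|^2 <= |k_(s^j)| |k_(s^(j+2))|,
  and this log-convexity gives the interpolation inequality
    |k_(s^(2m))|^2 <= eps |k_(s^(2m+2))|^2 + C_eps |k_(s^m)|^2.
  When E_m is small, k stays close to kappa; then every term of R is a bounded multiple of a
  product of two factors, one controlled by |k_(s^m)|^2 = 2 E_m and the other by |k_(s^(2m))|^2
  (one of them pointwise, the other in L^2). Thus int R^2 <= M E_m |k_(s^(2m))|^2, and
  interpolation with eps = delta / M turns this into delta |k_(s^(2m+2))|^2 + C E_m^2.
*)

section \<open>Smoothness and periodicity of the curvature\<close>

fun differentiable_ntimes :: "nat \<Rightarrow> (real \<Rightarrow> real) \<Rightarrow> bool" where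
  "differentiable_ntimes 0 f = True"
| "differentiable_ntimes (Suc n) f \<longleftrightarrow>
     (\<forall>t. (f has_real_derivative deriv f t) (at t)) \<and> differentiable_ntimes n (deriv f)"

lemma differentiable_ntimes_SucD: "differentiable_ntimes (Suc n) f \<Longrightarrow> differentiable_ntimes n f"
  by (induction n arbitrary: f) auto

lemma differentiable_ntimes_add:
  "differentiable_ntimes n f \<Longrightarrow> differentiable_ntimes n g \<Longrightarrow> differentiable_ntimes n (\<lambda>t. f t + g t)"
proof (induction n arbitrary: f g)
  case (Suc n)
  then have "deriv (\<lambda>t. f t + g t) = (\<lambda>t. deriv f t + deriv g t)"
    by (intro ext DERIV_imp_deriv) (auto intro!: derivative_eq_intros)
  with Suc show ?case by (auto intro!: derivative_eq_intros)
qed simp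

lemma differentiable_ntimes_mult:
  "differentiable_ntimes n f \<Longrightarrow> differentiable_ntimes n g \<Longrightarrow> differentiable_ntimes n (\<lambda>t. f t * g t)"
proof (induction n arbitrary: f g)
  case (Suc n)
  have product_rule: "deriv (\<lambda>t. f t * g t) = (\<lambda>t. deriv f t * g t + f t * deriv g t)"
    using Suc.prems by (intro ext DERIV_imp_deriv) (auto intro!: derivative_eq_intros)
  have "differentiable_ntimes n (deriv (\<lambda>t. f t * g t))"
    unfolding product_rule using Suc differentiable_ntimes_SucD
    by (auto intro!: differentiable_ntimes_add)
  with Suc.prems product_rule show ?case by (auto intro!: derivative_eq_intros)
qed simp

lemma differentiable_ntimes_deriv_chain:
  assumes "\<And>j t. (F j has_real_derivative F (Suc j) t) (at t)"
  shows "differentiable_ntimes n (F j)"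
proof (induction n arbitrary: j)
  case (Suc n)
  have "deriv (F j) = F (Suc j)" using assms by (intro ext DERIV_imp_deriv)
  with Suc assms show ?case by auto
qed simp

lemma differentiable_ntimes_higher_deriv:
  "differentiable_ntimes (i + n) f \<Longrightarrow> differentiable_ntimes n ((deriv ^^ i) f)"
  by (induction i arbitrary: f) (auto simp del: funpow.simps simp: funpow_Suc_right)

lemma has_real_derivative_higher_deriv:
  assumes "\<And>n. differentiable_ntimes n f"
  shows "((deriv ^^ j) f has_real_derivative (deriv ^^ Suc j) f t) (at t)"
  using differentiable_ntimes_higher_deriv[of j 1 f] assms by simp

lemma has_vector_derivative_periodic:
  fixes g :: "real \<Rightarrow> 'a::real_normed_vector"
  assumes g': "\<And>t. (g has_vector_derivative g' t) (at t)" and periodic: "\<And>t. g (t + p) = g t"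
  shows "g' (t + p) = g' t"
proof -
  have "((\<lambda>t. t + p) has_vector_derivative 1) (at t)"
    by (auto intro!: derivative_eq_intros)
  from vector_diff_chain_at[OF this g'[of "t + p"]]
  have "((\<lambda>t. g (t + p)) has_vector_derivative g' (t + p)) (at t)"
    by (simp add: o_def)
  then show ?thesis
    using periodic g' by (auto intro: vector_derivative_unique_at)
qed

lemma deriv_chain_periodic:
  fixes F :: "nat \<Rightarrow> real \<Rightarrow> 'a::real_normed_vector"
  assumes F': "\<And>j t. (F j has_vector_derivative F (Suc j) t) (at t)"
    and periodic: "\<And>t. F 0 (t + p) = F 0 t"
  shows "F j (t + p) = F j t"
proof (induction j arbitrary: t)
  case (Suc j)
  from F' show ?case by (rule has_vector_derivative_periodic) (rule Suc.IH)
qed (rule periodic)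

definition smooth_periodic :: "(real \<Rightarrow> real) \<Rightarrow> bool" where
  "smooth_periodic k \<longleftrightarrow>
     (\<forall>j t. (ds j k has_real_derivative ds (Suc j) k t) (at t)) \<and> (\<forall>t. k (t + 1) = k t)"

lemma smooth_periodic_ds_periodic:
  assumes "smooth_periodic k"
  shows "ds j k (t + 1) = ds j k t"
proof (rule deriv_chain_periodic[where F = "\<lambda>j. ds j k"])
  show "(ds j k has_vector_derivative ds (Suc j) k t) (at t)" for j t
    using assms by (simp add: smooth_periodic_def flip: has_real_derivative_iff_has_vector_derivative)
  show "ds 0 k (t + 1) = ds 0 k t" for t
    using assms by (simp add: smooth_periodic_def ds_def)
qed

lemma curv_smooth_periodic:
  assumes D: "smooth_closed_unit_curve D"
  shows "smooth_periodic (curv D)"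
proof -
  have D': "\<And>j t. (D j has_vector_derivative D (Suc j) t) (at t)"
    using D by (simp add: smooth_closed_unit_curve_def)
  have Re: "((\<lambda>t. Re (D j t)) has_real_derivative Re (D (Suc j) t)) (at t)"
    and Im: "((\<lambda>t. Im (D j t)) has_real_derivative Im (D (Suc j) t)) (at t)"
    and minus_Im: "((\<lambda>t. - Im (D j t)) has_real_derivative - Im (D (Suc j) t)) (at t)" for j t
    by (intro has_field_derivative_Re has_field_derivative_Im DERIV_minus D')+
  have "differentiable_ntimes n (\<lambda>t. Re (D j t))"
    and "differentiable_ntimes n (\<lambda>t. Im (D j t))"
    and "differentiable_ntimes n (\<lambda>t. - Im (D j t))" for n j
    by (rule differentiable_ntimes_deriv_chain[where F = "\<lambda>j t. Re (D j t)", OF Re]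
        differentiable_ntimes_deriv_chain[where F = "\<lambda>j t. Im (D j t)", OF Im]
        differentiable_ntimes_deriv_chain[where F = "\<lambda>j t. - Im (D j t)", OF minus_Im])+
  then have "differentiable_ntimes n (\<lambda>t. Re (D 1 t) * Im (D 2 t) + - Im (D 1 t) * Re (D 2 t))" for n
    by (intro differentiable_ntimes_add differentiable_ntimes_mult)
  moreover have "curv D = (\<lambda>t. Re (D 1 t) * Im (D 2 t) + - Im (D 1 t) * Re (D 2 t))"
    by (auto simp: curv_def)
  ultimately have "differentiable_ntimes n (curv D)" for n
    by simp
  moreover have "curv D (t + 1) = curv D t" for t
    using deriv_chain_periodic[where F = D, OF D'] D by (simp add: curv_def smooth_closed_unit_curve_def)
  ultimately show ?thesis
    unfolding smooth_periodic_def ds_def using has_real_derivative_higher_deriv by blast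
qed

section \<open>Mean-zero functions on the unit interval\<close>

definition L2sq :: "(real \<Rightarrow> real) \<Rightarrow> real" where
  "L2sq f = integral {0..1} (\<lambda>s. (f s)\<^sup>2)"

lemma L2sq_nonneg: "continuous_on {0..1} f \<Longrightarrow> 0 \<le> L2sq f"
  unfolding L2sq_def by (auto intro!: integral_nonneg integrable_continuous_interval continuous_intros)

lemma Em_eq_L2sq: "Em m k = L2sq (ds m k) / 2"
  by (simp add: Em_def L2sq_def)

lemma has_integral_0_imp_zero:
  fixes g :: "real \<Rightarrow> real"
  assumes g: "continuous_on {a..b} g" and int: "(g has_integral 0) {a..b}" and "a < b"
  obtains t where "t \<in> {a..b}" "g t = 0"
proof -
  consider "\<forall>t\<in>{a..b}. 0 \<le> g t" | "\<forall>t\<in>{a..b}. g t \<le> 0"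
    | x y where "x \<in> {a..b}" "y \<in> {a..b}" "g x \<le> 0" "0 \<le> g y"
    by (meson linear)
  then show thesis
  proof cases
    case 1
    then have "g a = 0"
      using has_integral_0_cbox_imp_0[of a b g a] g int \<open>a < b\<close> by auto
    with that[of a] \<open>a < b\<close> show thesis by simp
  next
    case 2
    then have "- g a = 0"
      using has_integral_0_cbox_imp_0[of a b "\<lambda>t. - g t" a] g int \<open>a < b\<close> has_integral_neg[OF int]
      by (auto intro: continuous_intros)
    with that[of a] \<open>a < b\<close> show thesis by simp
  next
    case 3
    have "connected (g ` {a..b})"
      by (rule connected_continuous_image[OF g]) simp
    then have "0 \<in> g ` {a..b}"
      by (rule connectedD_interval) (use 3 in auto)
    with that show thesis by auto
  qed
qed

lemma abs_diff_le_integral_abs_deriv: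
  fixes h h' :: "real \<Rightarrow> real"
  assumes h': "\<And>t. (h has_real_derivative h' t) (at t)" and cont: "continuous_on UNIV h'"
    and "c \<le> a" "a \<le> b" "b \<le> d"
  shows "\<bar>h b - h a\<bar> \<le> integral {c..d} (\<lambda>s. \<bar>h' s\<bar>)"
proof -
  have cont_on: "continuous_on S h'" for S
    using cont by (rule continuous_on_subset) simp
  have "(h' has_integral (h b - h a)) {a..b}"
    using assms h' by (intro fundamental_theorem_of_calculus)
      (auto simp flip: has_real_derivative_iff_has_vector_derivative intro: has_field_derivative_at_within)
  then have "h b - h a = integral {a..b} h'"
    by (rule integral_unique[symmetric])
  also have "\<bar>\<dots>\<bar> \<le> integral {a..b} (\<lambda>s. \<bar>h' s\<bar>)"
    by (rule integral_norm_bound_integral[where 'a = real, unfolded real_norm_def])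
      (auto intro!: integrable_continuous_interval continuous_intros cont_on)
  also have "\<dots> \<le> integral {c..d} (\<lambda>s. \<bar>h' s\<bar>)"
    using assms by (intro integral_subset_le) (auto intro!: integrable_continuous_interval continuous_intros cont_on)
  finally show ?thesis .
qed

lemma mean_zero_sq_le:
  fixes g g' :: "real \<Rightarrow> real"
  assumes g': "\<And>t. (g has_real_derivative g' t) (at t)" and cont: "continuous_on UNIV g'"
    and mean: "(g has_integral 0) {0..1}" and t: "t \<in> {0..1}"
  shows "(g t)\<^sup>2 \<le> L2sq g / 2 + 2 * L2sq g'"
proof -
  have cont_on: "continuous_on S g" "continuous_on S g'" for S
    using cont by (auto intro: continuous_at_imp_continuous_on DERIV_isCont[OF g'] continuous_on_subset)
  obtain t0 where t0: "t0 \<in> {0..1}" "g t0 = 0"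
    using has_integral_0_imp_zero[OF cont_on(1) mean] by auto
  have sq': "((\<lambda>s. (g s)\<^sup>2) has_real_derivative 2 * g s * g' s) (at s)" for s
    using g' by (auto intro!: derivative_eq_intros)
  have "continuous_on UNIV (\<lambda>s. 2 * g s * g' s)"
    by (intro continuous_intros cont_on)
  with t t0 have "\<bar>(g t)\<^sup>2 - (g t0)\<^sup>2\<bar> \<le> integral {0..1} (\<lambda>s. \<bar>2 * g s * g' s\<bar>)"
    using abs_diff_le_integral_abs_deriv[OF sq', of 0 t0 t 1]
      abs_diff_le_integral_abs_deriv[OF sq', of 0 t t0 1]
    by (cases "t0 \<le> t") (auto simp: abs_minus_commute)
  also have "\<dots> \<le> integral {0..1} (\<lambda>s. (g s)\<^sup>2 / 2 + 2 * (g' s)\<^sup>2)"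
  proof (rule integral_le)
    fix s
    have "0 \<le> (\<bar>g s\<bar> - 2 * \<bar>g' s\<bar>)\<^sup>2 / 2" by simp
    then show "\<bar>2 * g s * g' s\<bar> \<le> (g s)\<^sup>2 / 2 + 2 * (g' s)\<^sup>2"
      by (simp add: power2_eq_square abs_mult algebra_simps)
  qed (auto intro!: integrable_continuous_interval continuous_intros cont_on)
  also have "\<dots> = L2sq g / 2 + 2 * L2sq g'"
    unfolding L2sq_def
    by (subst integral_add) (auto intro!: integrable_continuous_interval continuous_intros cont_on)
  finally show ?thesis using t0 by simp
qed

lemma mean_zero_L2sq_le:
  fixes g g' :: "real \<Rightarrow> real"
  assumes g': "\<And>t. (g has_real_derivative g' t) (at t)" and cont: "continuous_on UNIV g'"
    and mean: "(g has_integral 0) {0..1}"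
  shows "L2sq g \<le> 4 * L2sq g'"
proof -
  have "continuous_on {0..1} g"
    by (intro continuous_at_imp_continuous_on ballI DERIV_isCont[OF g'])
  then have "L2sq g \<le> integral {0..1::real} (\<lambda>_. L2sq g / 2 + 2 * L2sq g')"
    using mean_zero_sq_le[OF assms] unfolding L2sq_def[of g]
    by (intro integral_le) (auto intro!: integrable_continuous_interval continuous_intros)
  then show ?thesis by simp
qed

lemma mean_zero_sq_le_L2sq_deriv:
  fixes g g' :: "real \<Rightarrow> real"
  assumes g': "\<And>t. (g has_real_derivative g' t) (at t)" and cont: "continuous_on UNIV g'"
    and mean: "(g has_integral 0) {0..1}" and t: "t \<in> {0..1}"
  shows "(g t)\<^sup>2 \<le> 4 * L2sq g'"
  using mean_zero_sq_le[OF assms] mean_zero_L2sq_le[OF g' cont mean] by simp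

section \<open>Poincare and interpolation inequalities for smooth periodic functions\<close>

lemma smooth_periodic_has_real_derivative:
  "smooth_periodic k \<Longrightarrow> (ds j k has_real_derivative ds (Suc j) k t) (at t)"
  by (simp add: smooth_periodic_def)

lemma smooth_periodic_continuous_on:
  "smooth_periodic k \<Longrightarrow> continuous_on S (ds j k)"
  by (intro continuous_at_imp_continuous_on ballI DERIV_isCont[OF smooth_periodic_has_real_derivative])

lemma smooth_periodic_ds_has_integral:
  assumes k: "smooth_periodic k"
  shows "(ds (Suc j) k has_integral (ds j k 1 - ds j k 0)) {0..1}"
  by (intro fundamental_theorem_of_calculus)
    (auto simp flip: has_real_derivative_iff_has_vector_derivative
      intro: has_field_derivative_at_within smooth_periodic_has_real_derivative[OF k])

lemma smooth_periodic_ds_mean_zero: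
  assumes k: "smooth_periodic k"
  shows "(ds (Suc j) k has_integral 0) {0..1}"
  using smooth_periodic_ds_has_integral[OF k, of j] smooth_periodic_ds_periodic[OF k, of j 0] by simp

lemma smooth_periodic_L2sq_by_parts:
  assumes k: "smooth_periodic k"
  shows "L2sq (ds (Suc j) k) = - integral {0..1} (\<lambda>s. ds j k s * ds (Suc (Suc j)) k s)"
proof -
  have cont: "continuous_on {0..1} (ds i k)" for i
    using smooth_periodic_continuous_on[OF k] .
  have "((\<lambda>s. ds j k s * ds (Suc j) k s) has_real_derivative
          ds (Suc j) k t * ds (Suc j) k t + ds j k t * ds (Suc (Suc j)) k t) (at t)" for t
    using k by (auto intro!: derivative_eq_intros smooth_periodic_has_real_derivative)
  then have "((\<lambda>s. (ds (Suc j) k s)\<^sup>2 + ds j k s * ds (Suc (Suc j)) k s) has_integral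
          (ds j k 1 * ds (Suc j) k 1 - ds j k 0 * ds (Suc j) k 0)) {0..1}"
    by (intro fundamental_theorem_of_calculus)
      (auto simp: power2_eq_square simp flip: has_real_derivative_iff_has_vector_derivative
        intro: has_field_derivative_at_within)
  then have "integral {0..1} (\<lambda>s. (ds (Suc j) k s)\<^sup>2 + ds j k s * ds (Suc (Suc j)) k s) = 0"
    using smooth_periodic_ds_periodic[OF k, of _ 0] by (simp add: integral_unique)
  then show ?thesis
    unfolding L2sq_def
    by (subst (asm) integral_add) (auto intro!: integrable_continuous_interval continuous_intros cont)
qed

lemma smooth_periodic_L2sq_interpolate:
  assumes k: "smooth_periodic k" and "e > 0"
  shows "L2sq (ds (Suc j) k) \<le> e * L2sq (ds (Suc (Suc j)) k) + L2sq (ds j k) / (4 * e)"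
proof -
  have cont: "continuous_on {0..1} (ds i k)" for i
    using smooth_periodic_continuous_on[OF k] .
  have "- integral {0..1} (\<lambda>s. ds j k s * ds (Suc (Suc j)) k s)
      = integral {0..1} (\<lambda>s. - (ds j k s * ds (Suc (Suc j)) k s))"
    by (simp add: integral_neg)
  also have "\<dots> \<le> integral {0..1} (\<lambda>s. e * (ds (Suc (Suc j)) k s)\<^sup>2 + (ds j k s)\<^sup>2 / (4 * e))"
  proof (rule integral_le)
    fix s
    have "0 \<le> (2 * e * ds (Suc (Suc j)) k s + ds j k s)\<^sup>2 / (4 * e)"
      using \<open>e > 0\<close> by simp
    also have "\<dots> = e * (ds (Suc (Suc j)) k s)\<^sup>2 + ds j k s * ds (Suc (Suc j)) k s + (ds j k s)\<^sup>2 / (4 * e)"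
      using \<open>e > 0\<close> by (simp add: power2_eq_square field_simps)
    finally show "- (ds j k s * ds (Suc (Suc j)) k s) \<le> e * (ds (Suc (Suc j)) k s)\<^sup>2 + (ds j k s)\<^sup>2 / (4 * e)"
      by linarith
  qed (use \<open>e > 0\<close> in \<open>auto intro!: integrable_continuous_interval continuous_intros cont\<close>)
  also have "\<dots> = e * L2sq (ds (Suc (Suc j)) k) + L2sq (ds j k) / (4 * e)"
    unfolding L2sq_def using \<open>e > 0\<close>
    by (subst integral_add) (auto intro!: integrable_continuous_interval continuous_intros cont)
  finally show ?thesis
    using smooth_periodic_L2sq_by_parts[OF k] by simp
qed

lemma smooth_periodic_sq_le_L2sq:
  assumes k: "smooth_periodic k" and "t \<in> {0..1}"
  shows "(ds (Suc j) k t)\<^sup>2 \<le> 4 * L2sq (ds (Suc (Suc j)) k)"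
  using assms by (intro mean_zero_sq_le_L2sq_deriv smooth_periodic_has_real_derivative
      smooth_periodic_continuous_on smooth_periodic_ds_mean_zero)

lemma smooth_periodic_L2sq_le:
  assumes k: "smooth_periodic k"
  shows "L2sq (ds (Suc j) k) \<le> 4 * L2sq (ds (Suc (Suc j)) k)"
  using assms by (intro mean_zero_L2sq_le smooth_periodic_has_real_derivative
      smooth_periodic_continuous_on smooth_periodic_ds_mean_zero)

lemma smooth_periodic_L2sq_le_pow:
  assumes k: "smooth_periodic k" and "1 \<le> i" "i \<le> j" "j \<le> i + N"
  shows "L2sq (ds i k) \<le> 4 ^ N * L2sq (ds j k)"
proof -
  have "L2sq (ds (Suc i) k) \<le> 4 ^ n * L2sq (ds (Suc i + n) k)" for i n
  proof (induction n)
    case (Suc n)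
    have "L2sq (ds (Suc i) k) \<le> 4 ^ n * L2sq (ds (Suc i + n) k)"
      by (rule Suc.IH)
    also have "\<dots> \<le> 4 ^ n * (4 * L2sq (ds (Suc i + Suc n) k))"
      using smooth_periodic_L2sq_le[OF k, of "i + n"] by (intro mult_left_mono) simp_all
    finally show ?case by (simp add: mult_ac)
  qed simp
  from this[of "i - 1" "j - i"] assms
  have "L2sq (ds i k) \<le> 4 ^ (j - i) * L2sq (ds j k)" by simp
  also have "\<dots> \<le> 4 ^ N * L2sq (ds j k)"
    using assms by (intro mult_right_mono power_increasing L2sq_nonneg smooth_periodic_continuous_on) auto
  finally show ?thesis .
qed

lemma smooth_periodic_sq_le_pow:
  assumes k: "smooth_periodic k" and "1 \<le> i" "i < j" "j \<le> Suc (i + N)" and t: "t \<in> {0..1}"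
  shows "(ds i k t)\<^sup>2 \<le> 4 ^ Suc N * L2sq (ds j k)"
proof -
  obtain i' where i: "i = Suc i'" using \<open>1 \<le> i\<close> by (cases i) auto
  have "(ds i k t)\<^sup>2 \<le> 4 * L2sq (ds (Suc i) k)"
    using smooth_periodic_sq_le_L2sq[OF k t, of i'] i by simp
  also have "\<dots> \<le> 4 * (4 ^ N * L2sq (ds j k))"
    using smooth_periodic_L2sq_le_pow[OF k, of "Suc i" j N] assms by simp
  finally show ?thesis by simp
qed

lemma smooth_periodic_mean_deviation_sq_le:
  assumes k: "smooth_periodic k" and mean: "integral {0..1} k = \<kappa>"
    and "1 \<le> j" "j \<le> Suc N" and t: "t \<in> {0..1}"
  shows "(k t - \<kappa>)\<^sup>2 \<le> 4 ^ Suc N * L2sq (ds j k)"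
proof -
  have k0: "ds 0 k = k" by (simp add: ds_def)
  have "k integrable_on {0..1}"
    using smooth_periodic_continuous_on[OF k, of _ 0] k0 by (metis integrable_continuous_interval)
  with mean have "((\<lambda>s. k s - \<kappa>) has_integral 0) {0..1}"
    using has_integral_diff[of k \<kappa> "{0..1}" "\<lambda>_. \<kappa>" \<kappa>] has_integral_const_real[of \<kappa> 0 1]
    by (auto simp: has_integral_integral)
  moreover have "((\<lambda>s. k s - \<kappa>) has_real_derivative ds 1 k s) (at s)" for s
    using smooth_periodic_has_real_derivative[OF k, of 0 s] k0 by (auto intro!: derivative_eq_intros)
  ultimately have "(k t - \<kappa>)\<^sup>2 \<le> 4 * L2sq (ds 1 k)"
    using t by (intro mean_zero_sq_le_L2sq_deriv smooth_periodic_continuous_on[OF k])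
  also have "\<dots> \<le> 4 * (4 ^ N * L2sq (ds j k))"
    using smooth_periodic_L2sq_le_pow[OF k, of 1 j N] assms by simp
  finally show ?thesis by simp
qed

text \<open>Minimising over e, the condition says that x is nonnegative and log-convex:
  x (j + 1) ^ 2 \<le> x j * x (j + 2).\<close>

definition interpolating_seq :: "(nat \<Rightarrow> real) \<Rightarrow> bool" where
  "interpolating_seq x \<longleftrightarrow>
     (\<forall>j. 0 \<le> x j) \<and> (\<forall>j e. e > 0 \<longrightarrow> x (Suc j) \<le> e * x (Suc (Suc j)) + x j / (4 * e))"

lemma interpolating_seq_bound:
  assumes "\<epsilon> > 0"
  shows "\<exists>C. \<forall>x j. interpolating_seq x \<longrightarrow> x (j + d) \<le> \<epsilon> * x (j + d + 1) + C * x j"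
  using assms
proof (induction d arbitrary: \<epsilon>)
  case 0
  show ?case
    by (rule exI[of _ 1]) (use 0 in \<open>auto simp: interpolating_seq_def\<close>)
next
  case (Suc d)
  obtain C where C: "\<And>x j. interpolating_seq x \<Longrightarrow> x (j + d) \<le> \<epsilon> * x (j + d + 1) + C * x j"
    using Suc by blast
  have "x (j + Suc d) \<le> \<epsilon> * x (j + Suc d + 1) + C / \<epsilon> * x j" if x: "interpolating_seq x" for x j
  proof -
    have "x (j + d + 1) \<le> \<epsilon> / 2 * x (j + d + 2) + x (j + d) / (2 * \<epsilon>)"
      using x Suc.prems unfolding interpolating_seq_def
      by (auto dest!: spec[of _ "j + d"] spec[of _ "\<epsilon> / 2"] simp: numeral_2_eq_2)
    also have "x (j + d) / (2 * \<epsilon>) \<le> (\<epsilon> * x (j + d + 1) + C * x j) / (2 * \<epsilon>)"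
      using C[OF x, of j] Suc.prems by (intro divide_right_mono) auto
    finally show ?thesis
      using Suc.prems by (simp add: field_simps)
  qed
  then show ?case by blast
qed

lemma smooth_periodic_interpolating_seq:
  "smooth_periodic k \<Longrightarrow> interpolating_seq (\<lambda>j. L2sq (ds j k))"
  unfolding interpolating_seq_def
  by (auto intro: L2sq_nonneg smooth_periodic_continuous_on smooth_periodic_L2sq_interpolate)

lemma smooth_periodic_interpolation:
  assumes "\<epsilon> > 0"
  shows "\<exists>C. \<forall>k. smooth_periodic k \<longrightarrow>
           L2sq (ds (2 * m) k) \<le> \<epsilon> * L2sq (ds (2 * m + 2) k) + C * L2sq (ds m k)"
proof -
  obtain C where C: "\<And>x j. interpolating_seq x \<Longrightarrow> x (j + m) \<le> \<epsilon> / 4 * x (j + m + 1) + C * x j"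
    using interpolating_seq_bound[of "\<epsilon> / 4" m] assms by auto
  have "L2sq (ds (2 * m) k) \<le> \<epsilon> * L2sq (ds (2 * m + 2) k) + C * L2sq (ds m k)"
    if k: "smooth_periodic k" for k
  proof -
    have "L2sq (ds (m + m) k) \<le> \<epsilon> / 4 * L2sq (ds (m + m + 1) k) + C * L2sq (ds m k)"
      using C[OF smooth_periodic_interpolating_seq[OF k], of m] by simp
    moreover have "\<epsilon> / 4 * L2sq (ds (m + m + 1) k) \<le> \<epsilon> / 4 * (4 * L2sq (ds (2 * m + 2) k))"
      using smooth_periodic_L2sq_le[OF k, of "m + m"] assms
      by (intro mult_left_mono) (simp_all add: numeral_2_eq_2)
    ultimately show ?thesis
      by (simp add: mult_2)
  qed
  then show ?thesis by blast
qed

section \<open>The remainder term\<close>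

lemma Rm_explicit:
  assumes "m = Suc n"
  shows "Rm m \<kappa> k s = (-1) ^ (m + 1) * ((k s)\<^sup>2 - \<kappa>\<^sup>2) * ds (2 * m) k s
     + k s * (\<Sum>r=1..n. (-1) ^ (r + 1) * ds (m - r) k s * ds (m + r) k s)
     - 1/2 * k s * (ds m k s)\<^sup>2"
proof -
  have last_summand: "(\<Sum>r=1..m. (-1) ^ (r + 1) * ds (m - r) k s * ds (m + r) k s)
      = (\<Sum>r=1..n. (-1) ^ (r + 1) * ds (m - r) k s * ds (m + r) k s) + (-1) ^ (m + 1) * k s * ds (2 * m) k s"
    using assms by (simp add: ds_def mult_2)
  show ?thesis
    unfolding Rm_def Km_def last_summand by (simp add: algebra_simps power2_eq_square)
qed

lemma Rm_sq_le_pointwise: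
  assumes m: "m = Suc n" and B: "(k s - \<kappa>)\<^sup>2 \<le> B" "B \<le> 1"
    and low: "\<And>r. r \<in> {1..n} \<Longrightarrow> (ds (m - r) k s)\<^sup>2 \<le> B"
    and Q: "(ds m k s)\<^sup>2 \<le> Q"
  shows "(Rm m \<kappa> k s)\<^sup>2 \<le> 3 * (B * (1 + 2 * \<bar>\<kappa>\<bar>)\<^sup>2 * (ds (2 * m) k s)\<^sup>2
           + (\<bar>\<kappa>\<bar> + 1)\<^sup>2 * (n * B * (\<Sum>r=1..n. (ds (m + r) k s)\<^sup>2))
           + (\<bar>\<kappa>\<bar> + 1)\<^sup>2 / 4 * Q * (ds m k s)\<^sup>2)"
proof -
  define u where "u = k s - \<kappa>"
  define S where "S = (\<Sum>r=1..n. (-1) ^ (r + 1) * ds (m - r) k s * ds (m + r) k s)"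
  have "0 \<le> B" "0 \<le> Q"
    using B(1) Q zero_le_power2 order.trans by blast+
  have "\<bar>u\<bar> \<le> 1"
    using B abs_le_square_iff[of u 1] by (simp add: u_def)
  then have k: "(k s)\<^sup>2 \<le> (\<bar>\<kappa>\<bar> + 1)\<^sup>2" and u2\<kappa>: "(u + 2 * \<kappa>)\<^sup>2 \<le> (1 + 2 * \<bar>\<kappa>\<bar>)\<^sup>2"
    by (auto simp: u_def abs_le_square_iff[symmetric] intro!: order.trans[OF abs_triangle_ineq])
  have "((k s)\<^sup>2 - \<kappa>\<^sup>2)\<^sup>2 = u\<^sup>2 * (u + 2 * \<kappa>)\<^sup>2"
    by (simp add: u_def power2_eq_square algebra_simps)
  also have "\<dots> \<le> B * (1 + 2 * \<bar>\<kappa>\<bar>)\<^sup>2"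
    using B \<open>0 \<le> B\<close> u2\<kappa> by (intro mult_mono) (auto simp: u_def)
  finally have first: "((k s)\<^sup>2 - \<kappa>\<^sup>2)\<^sup>2 * (ds (2 * m) k s)\<^sup>2 \<le> B * (1 + 2 * \<bar>\<kappa>\<bar>)\<^sup>2 * (ds (2 * m) k s)\<^sup>2"
    by (rule mult_right_mono) simp
  have "S\<^sup>2 \<le> (\<Sum>r=1..n. ((-1) ^ (r + 1) * ds (m - r) k s * ds (m + r) k s)\<^sup>2) * card {1..n}"
    unfolding S_def by (rule sum_squared_le_sum_of_squares)
  also have "\<dots> \<le> (\<Sum>r=1..n. B * (ds (m + r) k s)\<^sup>2) * n"
    unfolding card_atLeastAtMost diff_Suc_1 using low
    by (intro mult_right_mono sum_mono)
      (auto simp: power_mult_distrib mult_right_mono simp flip: power_mult power_even_eq)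
  finally have "S\<^sup>2 \<le> n * B * (\<Sum>r=1..n. (ds (m + r) k s)\<^sup>2)"
    by (simp add: sum_distrib_left mult_ac)
  with k have middle: "(k s)\<^sup>2 * S\<^sup>2 \<le> (\<bar>\<kappa>\<bar> + 1)\<^sup>2 * (n * B * (\<Sum>r=1..n. (ds (m + r) k s)\<^sup>2))"
    by (intro mult_mono) auto
  have "(ds m k s)\<^sup>2 * (ds m k s)\<^sup>2 \<le> Q * (ds m k s)\<^sup>2"
    using Q by (rule mult_right_mono) simp
  with k have last: "(k s)\<^sup>2 / 4 * ((ds m k s)\<^sup>2 * (ds m k s)\<^sup>2)
      \<le> (\<bar>\<kappa>\<bar> + 1)\<^sup>2 / 4 * Q * (ds m k s)\<^sup>2"
    unfolding mult.assoc[of _ Q] by (simp add: mult_mono)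
  have sign: "((-1::real) ^ (m + 1))\<^sup>2 = 1"
    by (simp flip: power_mult power_even_eq)
  have sq_sum: "(a + b - c)\<^sup>2 \<le> 3 * (a\<^sup>2 + b\<^sup>2 + c\<^sup>2)" for a b c :: real
    using sum_squares_ge_zero[of "a - b" "a + c"] zero_le_power2[of "b + c"]
    by (simp add: power2_eq_square algebra_simps)
  have "(Rm m \<kappa> k s)\<^sup>2 \<le> 3 * (((-1) ^ (m + 1) * ((k s)\<^sup>2 - \<kappa>\<^sup>2) * ds (2 * m) k s)\<^sup>2
      + (k s * S)\<^sup>2 + (1/2 * k s * (ds m k s)\<^sup>2)\<^sup>2)"
    unfolding Rm_explicit[OF m] S_def by (rule sq_sum)
  also have "\<dots> = 3 * (((k s)\<^sup>2 - \<kappa>\<^sup>2)\<^sup>2 * (ds (2 * m) k s)\<^sup>2 + (k s)\<^sup>2 * S\<^sup>2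
      + (k s)\<^sup>2 / 4 * ((ds m k s)\<^sup>2 * (ds m k s)\<^sup>2))"
    unfolding power_mult_distrib sign by (simp add: power2_eq_square)
  also have "\<dots> \<le> 3 * (B * (1 + 2 * \<bar>\<kappa>\<bar>)\<^sup>2 * (ds (2 * m) k s)\<^sup>2
           + (\<bar>\<kappa>\<bar> + 1)\<^sup>2 * (n * B * (\<Sum>r=1..n. (ds (m + r) k s)\<^sup>2))
           + (\<bar>\<kappa>\<bar> + 1)\<^sup>2 / 4 * Q * (ds m k s)\<^sup>2)"
    using first middle last by (intro mult_left_mono add_mono) auto
  finally show ?thesis .
qed

lemma Rm_sq_integral_le:
  assumes k: "smooth_periodic k" and mean: "integral {0..1} k = \<kappa>" and m: "m = Suc n"
    and small: "4 ^ m * L2sq (ds m k) \<le> 1"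
  shows "integral {0..1} (\<lambda>s. (Rm m \<kappa> k s)\<^sup>2)
    \<le> 3 * 4 ^ m * ((1 + 2 * \<bar>\<kappa>\<bar>)\<^sup>2 + (\<bar>\<kappa>\<bar> + 1)\<^sup>2 * (n\<^sup>2 * 4 ^ n + 1/4))
        * L2sq (ds m k) * L2sq (ds (2 * m) k)"
proof -
  define A X where "A = L2sq (ds m k)" and "X = L2sq (ds (2 * m) k)"
  define B c1 c2 where "B = 4 ^ m * A" and "c1 = (1 + 2 * \<bar>\<kappa>\<bar>)\<^sup>2" and "c2 = (\<bar>\<kappa>\<bar> + 1)\<^sup>2"
  have cont: "continuous_on S (ds j k)" for S j
    using smooth_periodic_continuous_on[OF k] .
  have L2sq: "((\<lambda>s. (ds j k s)\<^sup>2) has_integral L2sq (ds j k)) {0..1}" for j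
    unfolding L2sq_def by (auto intro!: integrable_integral integrable_continuous_interval continuous_intros cont)
  have "0 \<le> A" "0 \<le> X"
    unfolding A_def X_def by (auto intro: L2sq_nonneg cont)
  have upper: "L2sq (ds (m + r) k) \<le> 4 ^ n * X" if "r \<in> {1..n}" for r
    unfolding X_def using that m by (intro smooth_periodic_L2sq_le_pow[OF k]) auto
  have sum_upper: "(\<Sum>r=1..n. L2sq (ds (m + r) k)) \<le> n * (4 ^ n * X)"
    using sum_mono[of "{1..n}", OF upper] by simp
  have pointwise: "(Rm m \<kappa> k s)\<^sup>2 \<le> 3 * (B * c1 * (ds (2 * m) k s)\<^sup>2
      + c2 * (n * B * (\<Sum>r=1..n. (ds (m + r) k s)\<^sup>2)) + c2 / 4 * (4 ^ m * X) * (ds m k s)\<^sup>2)"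
    if s: "s \<in> {0..1}" for s
    unfolding c1_def c2_def
  proof (rule Rm_sq_le_pointwise[OF m])
    show "(k s - \<kappa>)\<^sup>2 \<le> B"
      unfolding B_def A_def using smooth_periodic_mean_deviation_sq_le[OF k mean _ _ s, of m n] m by simp
    show "(ds (m - r) k s)\<^sup>2 \<le> B" if "r \<in> {1..n}" for r
    proof -
      have "1 \<le> m - r" "m - r < m" "m \<le> Suc (m - r + n)"
        using m that by auto
      then show ?thesis
        unfolding B_def A_def using smooth_periodic_sq_le_pow[OF k _ _ _ s, of "m - r" m n] m by simp
    qed
    show "(ds m k s)\<^sup>2 \<le> 4 ^ m * X"
      unfolding X_def using smooth_periodic_sq_le_pow[OF k _ _ _ s, of m "2 * m" n] m by simp
    show "B \<le> 1"
      using small by (simp add: B_def A_def)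
  qed
  have majorant: "((\<lambda>s. 3 * (B * c1 * (ds (2 * m) k s)\<^sup>2
      + c2 * (n * B * (\<Sum>r=1..n. (ds (m + r) k s)\<^sup>2)) + c2 / 4 * (4 ^ m * X) * (ds m k s)\<^sup>2))
    has_integral 3 * (B * c1 * X + c2 * (n * B * (\<Sum>r=1..n. L2sq (ds (m + r) k))) + c2 / 4 * (4 ^ m * X) * A))
    {0..1}"
    unfolding A_def X_def[symmetric]
    by (intro has_integral_mult_right has_integral_add has_integral_sum L2sq[of m, folded A_def])
      (simp_all add: X_def L2sq)
  have "continuous_on {0..1} (\<lambda>s. (Rm m \<kappa> k s)\<^sup>2)"
    using cont[of _ 0] unfolding Rm_def Km_def ds_def[of 0] by (auto intro!: continuous_intros cont)
  then have "integral {0..1} (\<lambda>s. (Rm m \<kappa> k s)\<^sup>2)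
      \<le> 3 * (B * c1 * X + c2 * (n * B * (\<Sum>r=1..n. L2sq (ds (m + r) k))) + c2 / 4 * (4 ^ m * X) * A)"
    by (intro has_integral_le[OF integrable_integral majorant pointwise] integrable_continuous_interval)
  also have "\<dots> \<le> 3 * (B * c1 * X + c2 * (n * B * (n * (4 ^ n * X))) + c2 / 4 * (4 ^ m * X) * A)"
    using sum_upper \<open>0 \<le> A\<close> \<open>0 \<le> X\<close>
    by (intro mult_left_mono add_mono order_refl) (auto simp: B_def c1_def c2_def)
  also have "\<dots> = 3 * 4 ^ m * (c1 + c2 * (n\<^sup>2 * 4 ^ n + 1/4)) * A * X"
    by (simp add: B_def power2_eq_square algebra_simps)
  finally show ?thesis
    by (simp add: A_def X_def c1_def c2_def)
qed

lemma interpolation_absorb: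
  fixes M A X P \<delta> C :: real
  assumes "0 < M" "0 \<le> A" "A \<le> 1" "0 \<le> P" "0 \<le> \<delta>" and X: "X \<le> \<delta> / M * P + C * A"
  shows "M * A * X \<le> \<delta> * P + M * C * A\<^sup>2"
proof -
  have "M * A * X \<le> M * A * (\<delta> / M * P + C * A)"
    using assms by (intro mult_left_mono) auto
  also have "\<dots> = A * (\<delta> * P) + M * C * A\<^sup>2"
    using \<open>0 < M\<close> by (simp add: field_simps power2_eq_square)
  also have "\<dots> \<le> \<delta> * P + M * C * A\<^sup>2"
    using assms by (simp add: mult_left_le_one_le)
  finally show ?thesis .
qed

lemma Rm_sq_integral_le_small_energy:
  assumes "1 \<le> m" "0 < \<delta>"
  obtains \<epsilon> C where "0 < \<epsilon>"
    and "\<And>k. smooth_periodic k \<Longrightarrow> integral {0..1} k = \<kappa> \<Longrightarrow> Em m k \<le> \<epsilon> \<Longrightarrow>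
           integral {0..1} (\<lambda>s. (Rm m \<kappa> k s)\<^sup>2) \<le> \<delta> * L2sq (ds (2 * m + 2) k) + C * (Em m k)\<^sup>2"
proof -
  obtain n where m: "m = Suc n" using assms(1) by (cases m) auto
  define M where "M = 3 * 4 ^ m * ((1 + 2 * \<bar>\<kappa>\<bar>)\<^sup>2 + (\<bar>\<kappa>\<bar> + 1)\<^sup>2 * (n\<^sup>2 * 4 ^ n + 1/4))"
  have "0 < M"
    unfolding M_def by (intro mult_pos_pos add_pos_nonneg) auto
  obtain C where C: "\<And>k. smooth_periodic k \<Longrightarrow>
      L2sq (ds (2 * m) k) \<le> \<delta> / M * L2sq (ds (2 * m + 2) k) + C * L2sq (ds m k)"
    using smooth_periodic_interpolation[of "\<delta> / M" m] \<open>0 < M\<close> \<open>0 < \<delta>\<close> by auto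
  have "integral {0..1} (\<lambda>s. (Rm m \<kappa> k s)\<^sup>2) \<le> \<delta> * L2sq (ds (2 * m + 2) k) + 4 * M * C * (Em m k)\<^sup>2"
    if k: "smooth_periodic k" and mean: "integral {0..1} k = \<kappa>" and small: "Em m k \<le> 1 / (2 * 4 ^ m)" for k
  proof -
    define A where "A = L2sq (ds m k)"
    have "0 \<le> A"
      unfolding A_def by (intro L2sq_nonneg smooth_periodic_continuous_on[OF k])
    have "4 ^ m * A \<le> 1"
      using small by (simp add: Em_eq_L2sq A_def field_simps)
    moreover have "A \<le> 4 ^ m * A"
      using \<open>0 \<le> A\<close> by (simp add: mult_le_cancel_right1)
    ultimately have "A \<le> 1" by linarith
    have "integral {0..1} (\<lambda>s. (Rm m \<kappa> k s)\<^sup>2) \<le> M * A * L2sq (ds (2 * m) k)"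
      using Rm_sq_integral_le[OF k mean m] \<open>4 ^ m * A \<le> 1\<close> by (simp add: M_def A_def)
    also have "\<dots> \<le> \<delta> * L2sq (ds (2 * m + 2) k) + M * C * A\<^sup>2"
      using \<open>0 < M\<close> \<open>0 \<le> A\<close> \<open>A \<le> 1\<close> \<open>0 < \<delta>\<close> C[OF k]
      by (intro interpolation_absorb) (auto simp: A_def intro: L2sq_nonneg smooth_periodic_continuous_on[OF k])
    finally show ?thesis
      by (simp add: Em_eq_L2sq A_def power_divide)
  qed
  with that[of "1 / (2 * 4 ^ m)" "4 * M * C"] show thesis by simp
qed

theorem mainTheorem8:
  fixes m :: nat and \<omega> :: int and \<delta> :: real
  assumes "m \<ge> 1" and "\<omega> \<noteq> 0" and "0 < \<delta>" and "\<delta> < 1"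
  shows "\<exists>\<epsilon>R > 0. \<exists>C :: real. \<forall>D.
           smooth_closed_unit_curve D \<and>
           turning_number (curv D) = real_of_int \<omega> \<and>
           Em m (curv D) \<le> \<epsilon>R \<longrightarrow>
           integral {0..1} (\<lambda>s. (Rm m (2 * pi * real_of_int \<omega>) (curv D) s)\<^sup>2)
             \<le> \<delta> * integral {0..1} (\<lambda>s. (ds (2*m+2) (curv D) s)\<^sup>2)
               + C * (Em m (curv D))\<^sup>2"
proof -
  obtain \<epsilon> C where "0 < \<epsilon>"
    and bound: "\<And>k. smooth_periodic k \<Longrightarrow> integral {0..1} k = 2 * pi * real_of_int \<omega> \<Longrightarrow> Em m k \<le> \<epsilon> \<Longrightarrow>
      integral {0..1} (\<lambda>s. (Rm m (2 * pi * real_of_int \<omega>) k s)\<^sup>2)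
        \<le> \<delta> * L2sq (ds (2 * m + 2) k) + C * (Em m k)\<^sup>2"
    using Rm_sq_integral_le_small_energy[OF assms(1,3)] by blast
  have "integral {0..1} (curv D) = 2 * pi * real_of_int \<omega>"
    if "turning_number (curv D) = real_of_int \<omega>" for D
    using that by (simp add: turning_number_def field_simps)
  with \<open>0 < \<epsilon>\<close> bound curv_smooth_periodic show ?thesis
    unfolding L2sq_def by blast
qed

end
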